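(* Suppose $J$ satisfies (J) and (J1). Then for every $\epsilon\in(0,1)$, $\lim_{R\to\infty}\int_0^{(1-\epsilon)R}\int_R^\infty\tilde J_+(r,\rho)\,d\rho\,dr=0$ and $\lim_{R\to\infty}\int_0^R\int_R^\infty\tilde J_-(r,\rho)\,d\rho\,dr=0$.
   Context: $N\ge2$, $B_\rho=\{|x|<\rho\}\subset\mathbb R^N$. (J): $J\in C(\mathbb R_+)\cap L^\infty(\mathbb R_+)$, $J\ge0$, $J(0)>0$, $\int_{\mathbb R^N}J(|x|)dx=1$. (J1): $\int_0^\infty J(r)r^Ndr<\infty$. For $x\ne0$ with $|x|=r$ and $\rho>0$: $\tilde J_+(r,\rho)=\int_{\{y\in\partial B_\rho:\,y\cdot x\ge0\}}J(|x-y|)dS_y$, $\tilde J_-(r,\rho)=\int_{\{y\in\partial B_\rho:\,y\cdot x\le0\}}J(|x-y|)dS_y$. *)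

theory Defs
  imports "HOL-Analysis.Analysis"
begin

text \<open>Surface integral of a nonnegative function over the sphere of radius rho
  centred at 0 in the Euclidean space 'a (dimension N = DIM('a)), via the cone
  (polar-coordinate) formula:
  integral over sphere rho of f dS = N rho^(N-1) * integral over the unit ball of f(rho x/|x|) dx.\<close>
definition sphere_nn_integral :: "real \<Rightarrow> ('a::euclidean_space \<Rightarrow> real) \<Rightarrow> ennreal" where
  "sphere_nn_integral \<rho> f =
     ennreal (real DIM('a) * \<rho> ^ (DIM('a) - 1)) *
     (\<integral>\<^sup>+ x \<in> ball (0::'a) 1. ennreal (f (\<rho> *\<^sub>R (x /\<^sub>R norm x))) \<partial>lborel)"

text \<open>J-tilde-plus / J-tilde-minus at the point x = r e (e a unit vector, |x| = r).\<close>
definition Jt_plus :: "(real \<Rightarrow> real) \<Rightarrow> 'a::euclidean_space \<Rightarrow> real \<Rightarrow> real \<Rightarrow> ennreal" where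
  "Jt_plus J e r \<rho> = sphere_nn_integral \<rho>
     (\<lambda>y::'a. if y \<bullet> (r *\<^sub>R e) \<ge> 0 then J (norm (r *\<^sub>R e - y)) else 0)"

definition Jt_minus :: "(real \<Rightarrow> real) \<Rightarrow> 'a::euclidean_space \<Rightarrow> real \<Rightarrow> real \<Rightarrow> ennreal" where
  "Jt_minus J e r \<rho> = sphere_nn_integral \<rho>
     (\<lambda>y::'a. if y \<bullet> (r *\<^sub>R e) \<le> 0 then J (norm (r *\<^sub>R e - y)) else 0)"

end

(*
  Write the points of the sphere of radius rho as y = rho u with norm u = 1 and put
  d = r (e . u), so that norm (r e - y) = sqrt (rho^2 - 2 rho d + r^2) =: phi rho.  On the
  half-space selected by the kernel both phi rho and rho - d are at least kappa rho, with
  kappa = eps for J~+ (there r <= (1 - eps) R) and kappa = 1 for J~- (there d <= 0); hence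
  rho^(N-1) <= kappa^(1-N) phi^(N-1) phi', and substituting t = phi rho bounds the integral over
  rho >= R by a multiple of the tail of J(t) t^(N-1) beyond kappa R.  Integrating over the
  directions u and over r <= R <= t / kappa turns this into a multiple of the tail of J(t) t^N
  beyond kappa R, which vanishes as R tends to infinity by (J1).
*)
theory Submission
  imports Defs
begin

definition moment_tail :: "(real \<Rightarrow> real) \<Rightarrow> nat \<Rightarrow> real \<Rightarrow> ennreal" where
  "moment_tail J k L = (\<integral>\<^sup>+t\<in>{L..}. ennreal (J t * t ^ k) \<partial>lborel)"

lemma tendsto_set_nn_integral_atLeast_zero:
  fixes g :: "real \<Rightarrow> ennreal"
  assumes [measurable]: "g \<in> borel_measurable borel" and fin: "(\<integral>\<^sup>+t\<in>{a..}. g t \<partial>lborel) < \<infinity>"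
  shows "((\<lambda>L. \<integral>\<^sup>+t\<in>{L..}. g t \<partial>lborel) \<longlongrightarrow> 0) at_top"
proof (rule tendsto_at_topI_sequentially)
  fix X :: "nat \<Rightarrow> real" assume X: "filterlim X at_top sequentially"
  have "(\<lambda>n. \<integral>\<^sup>+t. g t * indicator {a..} t * indicator {X n..} t \<partial>lborel) \<longlonglongrightarrow> (\<integral>\<^sup>+(t::real). 0 \<partial>lborel)"
  proof (rule nn_integral_dominated_convergence[where w="\<lambda>t. g t * indicator {a..} t"])
    show "AE t in lborel. g t * indicator {a..} t * indicator {X n..} t \<le> g t * indicator {a..} t" for n
      by (auto split: split_indicator)
    show "AE t in lborel. (\<lambda>n. g t * indicator {a..} t * indicator {X n..} t) \<longlonglongrightarrow> 0"
    proof (rule AE_I2)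
      fix t
      have "eventually (\<lambda>n. t < X n) sequentially"
        using X by (simp add: filterlim_at_top_dense)
      then show "(\<lambda>n. g t * indicator {a..} t * indicator {X n..} t) \<longlonglongrightarrow> 0"
        by (rule tendsto_eventually[OF eventually_mono]) auto
    qed
  qed (use fin in simp_all)
  moreover have "eventually (\<lambda>n. (\<integral>\<^sup>+t. g t * indicator {a..} t * indicator {X n..} t \<partial>lborel)
      = (\<integral>\<^sup>+t\<in>{X n..}. g t \<partial>lborel)) sequentially"
    using X[unfolded filterlim_at_top_dense, rule_format, of a]
    by eventually_elim (auto intro!: nn_integral_cong split: split_indicator)
  ultimately show "(\<lambda>n. \<integral>\<^sup>+t\<in>{X n..}. g t \<partial>lborel) \<longlonglongrightarrow> 0"
    by (simp add: tendsto_cong)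
qed

lemma tendsto_moment_tail_zero:
  fixes J :: "real \<Rightarrow> real"
  assumes [measurable]: "J \<in> borel_measurable borel" and Jn: "\<And>t. 0 \<le> t \<Longrightarrow> 0 \<le> J t"
    and int: "(\<lambda>t. J t * t ^ k) integrable_on {0..}"
  shows "(moment_tail J k \<longlongrightarrow> 0) at_top"
proof -
  obtain I where "((\<lambda>t. J t * t ^ k) has_integral I) {0..}" using int by blast
  then have "(\<integral>\<^sup>+t\<in>{0..}. ennreal (J t * t ^ k) \<partial>lborel) = ennreal I"
    by (rule nn_integral_has_integral_lebesgue'[rotated]) (simp add: Jn)
  then show ?thesis
    unfolding moment_tail_def by (intro tendsto_set_nn_integral_atLeast_zero[where a=0]) auto
qed

lemma mult_moment_tail_le:
  fixes J :: "real \<Rightarrow> real"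
  assumes [measurable]: "J \<in> borel_measurable borel" and Jn: "\<And>t. 0 \<le> t \<Longrightarrow> 0 \<le> J t"
    and \<kappa>: "0 < \<kappa>" and R: "0 \<le> R"
  shows "ennreal R * moment_tail J k (\<kappa> * R) \<le> ennreal (1 / \<kappa>) * moment_tail J (Suc k) (\<kappa> * R)"
proof -
  have "R * (J t * t ^ k) \<le> 1 / \<kappa> * (J t * t ^ Suc k)" if t: "\<kappa> * R \<le> t" for t
  proof -
    have "0 \<le> \<kappa> * R" using \<kappa> R by simp
    then have "0 \<le> t" using t by linarith
    moreover have "R \<le> t / \<kappa>" using t \<kappa> by (simp add: field_simps)
    ultimately have "R * (J t * t ^ k) \<le> t / \<kappa> * (J t * t ^ k)"
      using Jn[of t] by (intro mult_right_mono) auto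
    then show ?thesis by (simp add: mult_ac)
  qed
  then have "(\<integral>\<^sup>+t. ennreal R * (ennreal (J t * t ^ k) * indicator {\<kappa> * R..} t) \<partial>lborel)
      \<le> (\<integral>\<^sup>+t. ennreal (1 / \<kappa>) * (ennreal (J t * t ^ Suc k) * indicator {\<kappa> * R..} t) \<partial>lborel)"
    using R \<kappa> by (intro nn_integral_mono) (auto simp: ennreal_mult'[symmetric] intro!: ennreal_leI split: split_indicator)
  then show ?thesis
    unfolding moment_tail_def by (simp add: nn_integral_cmult)
qed

lemma nn_integral_atLeast_le_Icc:
  fixes f :: "real \<Rightarrow> ennreal"
  assumes [measurable]: "f \<in> borel_measurable borel"
    and bound: "\<And>b. a \<le> b \<Longrightarrow> (\<integral>\<^sup>+x\<in>{a..b}. f x \<partial>lborel) \<le> M"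
  shows "(\<integral>\<^sup>+x\<in>{a..}. f x \<partial>lborel) \<le> M"
proof -
  let ?f = "\<lambda>n x. f x * indicator {a..a + real n} x"
  have "(SUP n. ?f n x) = f x * indicator {a..} x" for x
  proof (rule LIMSEQ_unique[OF LIMSEQ_SUP])
    obtain n where "x - a < real n"
      using reals_Archimedean2[of "x - a"] ..
    then have "?f m x = f x * indicator {a..} x" if "n \<le> m" for m
      using that by (auto split: split_indicator)
    then have "eventually (\<lambda>m. ?f m x = f x * indicator {a..} x) sequentially"
      by (rule eventually_sequentiallyI)
    then show "(\<lambda>n. ?f n x) \<longlonglongrightarrow> f x * indicator {a..} x"
      by (rule tendsto_eventually)
  qed (auto simp: incseq_def le_fun_def split: split_indicator)
  then have "(\<integral>\<^sup>+x\<in>{a..}. f x \<partial>lborel) = (\<integral>\<^sup>+x. (SUP n. ?f n x) \<partial>lborel)"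
    by simp
  also have "\<dots> = (SUP n. \<integral>\<^sup>+x. ?f n x \<partial>lborel)"
    by (rule nn_integral_monotone_convergence_SUP)
       (auto simp: incseq_def le_fun_def split: split_indicator)
  also have "\<dots> \<le> M"
    by (rule SUP_least) (simp add: bound)
  finally show ?thesis .
qed

lemma norm_scaleR_diff_scaleR_unit:
  fixes e u :: "'a::real_inner"
  assumes "norm e = 1" "norm u = 1"
  shows "norm (r *\<^sub>R e - \<rho> *\<^sub>R u) = sqrt (\<rho>\<^sup>2 - 2 * \<rho> * (r * (e \<bullet> u)) + r\<^sup>2)"
proof -
  have "e \<bullet> e = 1" "u \<bullet> u = 1" using assms by (simp_all add: dot_square_norm)
  then have "(r *\<^sub>R e - \<rho> *\<^sub>R u) \<bullet> (r *\<^sub>R e - \<rho> *\<^sub>R u) = \<rho>\<^sup>2 - 2 * \<rho> * (r * (e \<bullet> u)) + r\<^sup>2"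
    by (simp add: inner_diff_left inner_diff_right inner_commute power2_eq_square algebra_simps)
  then show ?thesis by (simp add: norm_eq_sqrt_inner)
qed

lemma has_real_derivative_sqrt_quadratic:
  assumes "0 < \<rho>\<^sup>2 - 2 * \<rho> * d + r\<^sup>2"
  shows "((\<lambda>\<rho>. sqrt (\<rho>\<^sup>2 - 2 * \<rho> * d + r\<^sup>2)) has_real_derivative
           (\<rho> - d) / sqrt (\<rho>\<^sup>2 - 2 * \<rho> * d + r\<^sup>2)) (at \<rho>)"
  using assms by (auto intro!: derivative_eq_intros simp: field_simps)

lemma radial_weight_le:
  fixes N :: nat and \<kappa> \<rho> d \<phi> j :: real
  assumes N: "2 \<le> N" and \<kappa>: "0 < \<kappa>" and \<rho>: "0 < \<rho>"
    and lin: "\<kappa> * \<rho> \<le> \<rho> - d" and \<phi>: "\<kappa> * \<rho> \<le> \<phi>" and j: "0 \<le> j"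
  shows "real N * \<rho> ^ (N - 1) * j \<le> real N / \<kappa> ^ (N - 1) * (j * \<phi> ^ (N - 1) * ((\<rho> - d) / \<phi>))"
proof -
  define m where "m = N - 2"
  have m: "N - 1 = Suc m" using N unfolding m_def by simp
  have "0 < \<kappa> * \<rho>" using \<kappa> \<rho> by simp
  then have "(\<kappa> * \<rho>) ^ m * (\<kappa> * \<rho>) \<le> \<phi> ^ m * (\<rho> - d)"
    using \<phi> lin by (intro mult_mono power_mono) auto
  moreover have "\<phi> ^ (N - 1) * ((\<rho> - d) / \<phi>) = \<phi> ^ m * (\<rho> - d)"
    using \<open>0 < \<kappa> * \<rho>\<close> \<phi> unfolding m by simp
  ultimately have "\<kappa> ^ (N - 1) * \<rho> ^ (N - 1) \<le> \<phi> ^ (N - 1) * ((\<rho> - d) / \<phi>)"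
    unfolding m by (simp add: power_mult_distrib mult_ac)
  then have "real N / \<kappa> ^ (N - 1) * (\<kappa> ^ (N - 1) * \<rho> ^ (N - 1))
      \<le> real N / \<kappa> ^ (N - 1) * (\<phi> ^ (N - 1) * ((\<rho> - d) / \<phi>))"
    using \<kappa> by (intro mult_left_mono) auto
  then have "real N * \<rho> ^ (N - 1) \<le> real N / \<kappa> ^ (N - 1) * (\<phi> ^ (N - 1) * ((\<rho> - d) / \<phi>))"
    using \<kappa> by simp
  from mult_right_mono[OF this j] show ?thesis
    by (simp add: mult_ac)
qed

lemma radial_Icc_integral_le_moment_tail:
  fixes J :: "real \<Rightarrow> real" and N :: nat and \<kappa> R b r d :: real
  assumes [measurable]: "J \<in> borel_measurable borel" and Jn: "\<And>t. 0 \<le> t \<Longrightarrow> 0 \<le> J t"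
    and N: "2 \<le> N" and \<kappa>: "0 < \<kappa>" and R: "0 < R" and b: "R \<le> b"
    and lin: "\<And>\<rho>. R \<le> \<rho> \<Longrightarrow> \<kappa> * \<rho> \<le> \<rho> - d"
    and quad: "\<And>\<rho>. R \<le> \<rho> \<Longrightarrow> (\<kappa> * \<rho>)\<^sup>2 \<le> \<rho>\<^sup>2 - 2 * \<rho> * d + r\<^sup>2"
  shows "(\<integral>\<^sup>+\<rho>\<in>{R..b}. ennreal (real N * \<rho> ^ (N - 1) * J (sqrt (\<rho>\<^sup>2 - 2 * \<rho> * d + r\<^sup>2))) \<partial>lborel)
    \<le> ennreal (real N / \<kappa> ^ (N - 1)) * moment_tail J (N - 1) (\<kappa> * R)"
proof -
  define \<phi> where "\<phi> \<rho> = sqrt (\<rho>\<^sup>2 - 2 * \<rho> * d + r\<^sup>2)" for \<rho>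
  define \<phi>' where "\<phi>' \<rho> = (\<rho> - d) / \<phi> \<rho>" for \<rho>
  define F where "F t = J t * t ^ (N - 1)" for t
  have pos: "0 < \<kappa> * \<rho>" if "R \<le> \<rho>" for \<rho>
    using \<kappa> R that by simp
  have \<phi>_ge: "\<kappa> * \<rho> \<le> \<phi> \<rho>" if "R \<le> \<rho>" for \<rho>
    unfolding \<phi>_def by (rule real_le_rsqrt) (rule quad[OF that])
  have quad_pos: "0 < \<rho>\<^sup>2 - 2 * \<rho> * d + r\<^sup>2" if "R \<le> \<rho>" for \<rho>
  proof -
    have "0 < (\<kappa> * \<rho>)\<^sup>2" using pos[OF that] by (rule zero_less_power)
    then show ?thesis using quad[OF that] by linarith
  qed
  have "\<phi>' \<rho> \<ge> 0" if "R \<le> \<rho>" for \<rho>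
    unfolding \<phi>'_def using lin[OF that] pos[OF that] \<phi>_ge[OF that] by simp
  moreover have "(\<phi> has_real_derivative \<phi>' \<rho>) (at \<rho>)" if "R \<le> \<rho>" for \<rho>
    unfolding \<phi>_def \<phi>'_def by (rule has_real_derivative_sqrt_quadratic[OF quad_pos[OF that]])
  moreover have "continuous_on {R..b} \<phi>'"
    unfolding \<phi>'_def \<phi>_def by (intro continuous_intros) (force dest: quad_pos)
  ultimately have subst: "(\<integral>\<^sup>+\<rho>. ennreal (F (\<phi> \<rho>) * \<phi>' \<rho> * indicator {R..b} \<rho>) \<partial>lborel)
      = (\<integral>\<^sup>+t. ennreal (F t * indicator {\<phi> R..\<phi> b} t) \<partial>lborel)"
    using b by (intro nn_integral_substitution[symmetric]) (auto simp: F_def set_borel_measurable_def)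
  have "(\<integral>\<^sup>+\<rho>\<in>{R..b}. ennreal (real N * \<rho> ^ (N - 1) * J (\<phi> \<rho>)) \<partial>lborel)
      \<le> (\<integral>\<^sup>+\<rho>. ennreal (real N / \<kappa> ^ (N - 1)) * ennreal (F (\<phi> \<rho>) * \<phi>' \<rho> * indicator {R..b} \<rho>) \<partial>lborel)"
  proof (intro nn_integral_mono)
    fix \<rho>
    show "ennreal (real N * \<rho> ^ (N - 1) * J (\<phi> \<rho>)) * indicator {R..b} \<rho>
        \<le> ennreal (real N / \<kappa> ^ (N - 1)) * ennreal (F (\<phi> \<rho>) * \<phi>' \<rho> * indicator {R..b} \<rho>)"
    proof (cases "\<rho> \<in> {R..b}")
      case True
      then have "R \<le> \<rho>" by simp
      have "real N * \<rho> ^ (N - 1) * J (\<phi> \<rho>) \<le> real N / \<kappa> ^ (N - 1) * (F (\<phi> \<rho>) * \<phi>' \<rho>)"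
        unfolding F_def \<phi>'_def
        using pos[OF \<open>R \<le> \<rho>\<close>] \<phi>_ge[OF \<open>R \<le> \<rho>\<close>] \<open>R \<le> \<rho>\<close> R
        by (intro radial_weight_le[OF N \<kappa> _ lin[OF \<open>R \<le> \<rho>\<close>] _ Jn]) auto
      then show ?thesis
        using True \<kappa> by (simp add: ennreal_mult'[symmetric] ennreal_leI)
    qed simp
  qed
  also have "\<dots> = ennreal (real N / \<kappa> ^ (N - 1)) * (\<integral>\<^sup>+t. ennreal (F t * indicator {\<phi> R..\<phi> b} t) \<partial>lborel)"
    unfolding subst[symmetric] by (rule nn_integral_cmult) (simp add: F_def \<phi>_def \<phi>'_def)
  also have "\<dots> \<le> ennreal (real N / \<kappa> ^ (N - 1)) * moment_tail J (N - 1) (\<kappa> * R)"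
    unfolding moment_tail_def F_def using \<phi>_ge[of R]
    by (intro mult_left_mono nn_integral_mono) (auto split: split_indicator)
  finally show ?thesis unfolding \<phi>_def .
qed

lemma radial_integral_le_moment_tail:
  fixes J :: "real \<Rightarrow> real" and N :: nat and \<kappa> R r d :: real
  assumes [measurable]: "J \<in> borel_measurable borel" and Jn: "\<And>t. 0 \<le> t \<Longrightarrow> 0 \<le> J t"
    and N: "2 \<le> N" and \<kappa>: "0 < \<kappa>" and R: "0 < R"
    and lin: "\<And>\<rho>. R \<le> \<rho> \<Longrightarrow> \<kappa> * \<rho> \<le> \<rho> - d"
    and quad: "\<And>\<rho>. R \<le> \<rho> \<Longrightarrow> (\<kappa> * \<rho>)\<^sup>2 \<le> \<rho>\<^sup>2 - 2 * \<rho> * d + r\<^sup>2"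
  shows "(\<integral>\<^sup>+\<rho>\<in>{R..}. ennreal (real N * \<rho> ^ (N - 1) * J (sqrt (\<rho>\<^sup>2 - 2 * \<rho> * d + r\<^sup>2))) \<partial>lborel)
    \<le> ennreal (real N / \<kappa> ^ (N - 1)) * moment_tail J (N - 1) (\<kappa> * R)"
  by (rule nn_integral_atLeast_le_Icc)
     (use radial_Icc_integral_le_moment_tail[OF assms(1-5) _ lin quad] in simp_all)

lemma set_nn_integral_sphere_le:
  fixes f :: "'a::euclidean_space \<Rightarrow> real"
  assumes [measurable]: "f \<in> borel_measurable borel" and fn: "\<And>y. 0 \<le> f y" and R: "0 \<le> R"
    and bound: "\<And>u::'a. norm u = 1 \<Longrightarrow>
      (\<integral>\<^sup>+\<rho>\<in>{R..}. ennreal (real DIM('a) * \<rho> ^ (DIM('a) - 1) * f (\<rho> *\<^sub>R u)) \<partial>lborel) \<le> M"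
  shows "(\<integral>\<^sup>+\<rho>\<in>{R..}. sphere_nn_integral \<rho> f \<partial>lborel) \<le> M * emeasure lborel (ball (0::'a) 1)"
proof -
  let ?N = "DIM('a)"
  have [measurable]: "ball (0::'a) 1 \<in> sets borel" by simp
  define G where "G x \<rho> = ennreal (real ?N * \<rho> ^ (?N - 1) * f (\<rho> *\<^sub>R (x /\<^sub>R norm x)))
    * indicator {R..} \<rho> * indicator (ball (0::'a) 1) x" for x \<rho>
  have "(\<lambda>p. G (fst p) (snd p)) \<in> borel_measurable (borel \<Otimes>\<^sub>M borel)"
    unfolding G_def by measurable
  then have "case_prod G \<in> borel_measurable (lborel \<Otimes>\<^sub>M lborel)"
    by (simp add: split_beta' measurable_cong_sets[OF sets_pair_measure_cong[OF sets_lborel sets_lborel] refl])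
  then have "(\<integral>\<^sup>+\<rho>. (\<integral>\<^sup>+x. G x \<rho> \<partial>lborel) \<partial>lborel) = (\<integral>\<^sup>+x. (\<integral>\<^sup>+\<rho>. G x \<rho> \<partial>lborel) \<partial>lborel)"
    by (rule lborel_pair.Fubini')
  moreover have "sphere_nn_integral \<rho> f * indicator {R..} \<rho> = (\<integral>\<^sup>+x. G x \<rho> \<partial>lborel)" for \<rho>
  proof (cases "R \<le> \<rho>")
    case True
    have "sphere_nn_integral \<rho> f = (\<integral>\<^sup>+x. ennreal (real ?N * \<rho> ^ (?N - 1)) *
        (ennreal (f (\<rho> *\<^sub>R (x /\<^sub>R norm x))) * indicator (ball 0 1) x) \<partial>lborel)"
      unfolding sphere_nn_integral_def by (rule nn_integral_cmult[symmetric]) measurable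
    also have "\<dots> = (\<integral>\<^sup>+x. G x \<rho> \<partial>lborel)"
      using True R fn by (intro nn_integral_cong) (simp add: G_def ennreal_mult mult_ac)
    finally show ?thesis using True by simp
  qed (simp add: G_def)
  moreover have "(\<integral>\<^sup>+\<rho>. G x \<rho> \<partial>lborel) \<le> M * indicator (ball (0::'a) 1) x" if "x \<noteq> 0" for x
    using bound[of "x /\<^sub>R norm x"] that by (simp add: G_def split: split_indicator)
  then have "(\<integral>\<^sup>+x. (\<integral>\<^sup>+\<rho>. G x \<rho> \<partial>lborel) \<partial>lborel) \<le> (\<integral>\<^sup>+x. M * indicator (ball (0::'a) 1) x \<partial>lborel)"
    by (intro nn_integral_mono_AE eventually_mono[OF AE_lborel_singleton[of 0]]) auto
  ultimately show ?thesis by (simp add: nn_integral_cmult_indicator)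
qed

text \<open>\<open>Jt_plus\<close> and \<open>Jt_minus\<close> are the cases \<open>P s = (0 \<le> s)\<close> and \<open>P s = (s \<le> 0)\<close>.\<close>
definition Jt_half_space ::
    "(real \<Rightarrow> real) \<Rightarrow> 'a::euclidean_space \<Rightarrow> (real \<Rightarrow> bool) \<Rightarrow> real \<Rightarrow> real \<Rightarrow> ennreal" where
  "Jt_half_space J e P r \<rho> = sphere_nn_integral \<rho>
     (\<lambda>y::'a. if P (y \<bullet> (r *\<^sub>R e)) then J (norm (r *\<^sub>R e - y)) else 0)"

lemma half_space_integral_le_moment_tail:
  fixes J :: "real \<Rightarrow> real" and e :: "'a::euclidean_space" and P :: "real \<Rightarrow> bool"
  assumes [measurable]: "J \<in> borel_measurable borel" "Measurable.pred borel P"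
    and Jn: "\<And>t. 0 \<le> t \<Longrightarrow> 0 \<le> J t" and dim: "2 \<le> DIM('a)" and e: "norm e = 1"
    and \<kappa>: "0 < \<kappa>" and R: "0 < R" and a: "0 \<le> a" "a \<le> R"
    \<comment> \<open>\<open>d\<close> stands for \<open>r (e \<bullet> u)\<close>, \<open>u\<close> the direction of the ray \<open>\<rho> u\<close>.\<close>
    and radial: "\<And>r d. 0 \<le> r \<Longrightarrow> r \<le> a \<Longrightarrow> d \<le> r \<Longrightarrow>
      (\<forall>\<rho>\<ge>R. \<not> P (\<rho> * d)) \<or> (\<forall>\<rho>\<ge>R. \<kappa> * \<rho> \<le> \<rho> - d \<and> (\<kappa> * \<rho>)\<^sup>2 \<le> \<rho>\<^sup>2 - 2 * \<rho> * d + r\<^sup>2)"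
  shows "(\<integral>\<^sup>+r\<in>{0..a}. (\<integral>\<^sup>+\<rho>\<in>{R..}. Jt_half_space J e P r \<rho> \<partial>lborel) \<partial>lborel)
    \<le> ennreal (real DIM('a) / \<kappa> ^ (DIM('a) - 1)) * emeasure lborel (ball (0::'a) 1)
      * ennreal (1 / \<kappa>) * moment_tail J DIM('a) (\<kappa> * R)"
proof -
  let ?N = "DIM('a)"
  let ?f = "\<lambda>r (y::'a). if P (y \<bullet> (r *\<^sub>R e)) then J (norm (r *\<^sub>R e - y)) else 0"
  let ?K = "ennreal (real ?N / \<kappa> ^ (?N - 1))"
  let ?V = "emeasure lborel (ball (0::'a) 1)"
  have inner: "(\<integral>\<^sup>+\<rho>\<in>{R..}. Jt_half_space J e P r \<rho> \<partial>lborel) \<le> ?K * moment_tail J (?N - 1) (\<kappa> * R) * ?V"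
    if r: "0 \<le> r" "r \<le> a" for r
    unfolding Jt_half_space_def
  proof (rule set_nn_integral_sphere_le)
    show "?f r \<in> borel_measurable borel" by measurable
    show "0 \<le> ?f r y" for y using Jn by simp
    fix u :: 'a assume u: "norm u = 1"
    define d where "d = r * (e \<bullet> u)"
    have "e \<bullet> u \<le> 1" using Cauchy_Schwarz_ineq2[of e u] e u by simp
    then have "d \<le> r" unfolding d_def using mult_left_mono[of "e \<bullet> u" 1 r] r by simp
    have inner_eq: "(\<rho> *\<^sub>R u) \<bullet> (r *\<^sub>R e) = \<rho> * d" for \<rho>
      unfolding d_def by (simp add: inner_commute)
    from radial[OF r \<open>d \<le> r\<close>]
    show "(\<integral>\<^sup>+\<rho>\<in>{R..}. ennreal (real ?N * \<rho> ^ (?N - 1) * ?f r (\<rho> *\<^sub>R u)) \<partial>lborel)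
      \<le> ?K * moment_tail J (?N - 1) (\<kappa> * R)"
    proof
      assume "\<forall>\<rho>\<ge>R. \<not> P (\<rho> * d)"
      then have "(\<integral>\<^sup>+\<rho>\<in>{R..}. ennreal (real ?N * \<rho> ^ (?N - 1) * ?f r (\<rho> *\<^sub>R u)) \<partial>lborel)
          = (\<integral>\<^sup>+(\<rho>::real). 0 \<partial>lborel)"
        unfolding inner_eq by (intro nn_integral_cong) (simp split: split_indicator)
      then show ?thesis by simp
    next
      assume bounds: "\<forall>\<rho>\<ge>R. \<kappa> * \<rho> \<le> \<rho> - d \<and> (\<kappa> * \<rho>)\<^sup>2 \<le> \<rho>\<^sup>2 - 2 * \<rho> * d + r\<^sup>2"
      have "(\<integral>\<^sup>+\<rho>\<in>{R..}. ennreal (real ?N * \<rho> ^ (?N - 1) * ?f r (\<rho> *\<^sub>R u)) \<partial>lborel)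
          \<le> (\<integral>\<^sup>+\<rho>\<in>{R..}. ennreal (real ?N * \<rho> ^ (?N - 1) * J (sqrt (\<rho>\<^sup>2 - 2 * \<rho> * d + r\<^sup>2))) \<partial>lborel)"
        using Jn R unfolding norm_scaleR_diff_scaleR_unit[OF e u] d_def[symmetric]
        by (intro nn_integral_mono) (auto intro!: ennreal_leI mult_left_mono split: split_indicator)
      also have "\<dots> \<le> ?K * moment_tail J (?N - 1) (\<kappa> * R)"
        using bounds by (intro radial_integral_le_moment_tail[OF _ Jn dim \<kappa> R]) auto
      finally show ?thesis .
    qed
  qed (use R in simp)
  have "(\<integral>\<^sup>+r\<in>{0..a}. (\<integral>\<^sup>+\<rho>\<in>{R..}. Jt_half_space J e P r \<rho> \<partial>lborel) \<partial>lborel)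
      \<le> (\<integral>\<^sup>+r. ?K * moment_tail J (?N - 1) (\<kappa> * R) * ?V * indicator {0..a} r \<partial>lborel)"
    using inner by (intro nn_integral_mono) (simp split: split_indicator)
  also have "\<dots> = ?K * ?V * (ennreal a * moment_tail J (?N - 1) (\<kappa> * R))"
    using a by (subst nn_integral_cmult_indicator) (simp_all add: mult_ac)
  also have "\<dots> \<le> ?K * ?V * (ennreal (1 / \<kappa>) * moment_tail J (Suc (?N - 1)) (\<kappa> * R))"
  proof (intro mult_left_mono)
    have "ennreal a * moment_tail J (?N - 1) (\<kappa> * R) \<le> ennreal R * moment_tail J (?N - 1) (\<kappa> * R)"
      using a by (intro mult_right_mono ennreal_leI) auto
    also have "\<dots> \<le> ennreal (1 / \<kappa>) * moment_tail J (Suc (?N - 1)) (\<kappa> * R)"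
      using R by (intro mult_moment_tail_le[OF _ Jn \<kappa>]) auto
    finally show "ennreal a * moment_tail J (?N - 1) (\<kappa> * R) \<le> \<dots>" .
  qed auto
  finally show ?thesis
    using dim by (simp add: mult_ac)
qed

lemma half_space_integral_tendsto_zero:
  fixes J :: "real \<Rightarrow> real" and e :: "'a::euclidean_space" and P :: "real \<Rightarrow> bool"
  assumes [measurable]: "J \<in> borel_measurable borel" "Measurable.pred borel P"
    and Jn: "\<And>t. 0 \<le> t \<Longrightarrow> 0 \<le> J t" and dim: "2 \<le> DIM('a)" and e: "norm e = 1"
    and J1: "(\<lambda>t. J t * t ^ DIM('a)) integrable_on {0..}"
    and \<kappa>: "0 < \<kappa>" and c: "0 \<le> c" "c \<le> 1"
    and radial: "\<And>R r d. 0 < R \<Longrightarrow> 0 \<le> r \<Longrightarrow> r \<le> c * R \<Longrightarrow> d \<le> r \<Longrightarrow>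
      (\<forall>\<rho>\<ge>R. \<not> P (\<rho> * d)) \<or> (\<forall>\<rho>\<ge>R. \<kappa> * \<rho> \<le> \<rho> - d \<and> (\<kappa> * \<rho>)\<^sup>2 \<le> \<rho>\<^sup>2 - 2 * \<rho> * d + r\<^sup>2)"
  shows "((\<lambda>R. \<integral>\<^sup>+r\<in>{0..c * R}. (\<integral>\<^sup>+\<rho>\<in>{R..}. Jt_half_space J e P r \<rho> \<partial>lborel) \<partial>lborel) \<longlongrightarrow> 0) at_top"
proof (rule tendsto_sandwich[of "\<lambda>_. 0"])
  define C where "C = ennreal (real DIM('a) / \<kappa> ^ (DIM('a) - 1)) * emeasure lborel (ball (0::'a) 1)
    * ennreal (1 / \<kappa>)"
  have "C < \<infinity>"
    unfolding C_def using emeasure_bounded_finite[of "ball (0::'a) 1"] by (simp add: ennreal_mult_less_top)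
  moreover have "filterlim (\<lambda>R. \<kappa> * R) at_top at_top"
    using \<kappa> by (intro filterlim_tendsto_pos_mult_at_top[OF tendsto_const _ filterlim_ident])
  then have "((\<lambda>R. moment_tail J DIM('a) (\<kappa> * R)) \<longlongrightarrow> 0) at_top"
    using filterlim_compose[OF tendsto_moment_tail_zero[OF _ Jn J1]] by (simp add: o_def)
  ultimately show "((\<lambda>R. C * moment_tail J DIM('a) (\<kappa> * R)) \<longlongrightarrow> 0) at_top"
    using ennreal_tendsto_cmult by fastforce
  show "\<forall>\<^sub>F R in at_top. (\<integral>\<^sup>+r\<in>{0..c * R}. (\<integral>\<^sup>+\<rho>\<in>{R..}. Jt_half_space J e P r \<rho> \<partial>lborel) \<partial>lborel)
    \<le> C * moment_tail J DIM('a) (\<kappa> * R)"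
    using eventually_gt_at_top[of 0]
  proof eventually_elim
    case (elim R)
    then show ?case
      unfolding C_def using c radial[OF elim]
      by (intro half_space_integral_le_moment_tail[OF _ _ Jn dim e \<kappa> elim]) (auto simp: mult_left_le_one_le)
  qed
qed auto

lemma radial_bounds_interior:
  fixes \<epsilon> R r d \<rho> :: real
  assumes \<epsilon>: "0 < \<epsilon>" "\<epsilon> < 1" and r: "0 \<le> r" "r \<le> (1 - \<epsilon>) * R" and d: "d \<le> r" and \<rho>: "R \<le> \<rho>"
  shows "\<epsilon> * \<rho> \<le> \<rho> - d \<and> (\<epsilon> * \<rho>)\<^sup>2 \<le> \<rho>\<^sup>2 - 2 * \<rho> * d + r\<^sup>2"
proof -
  have "0 \<le> (1 - \<epsilon>) * R" using r by linarith
  then have "0 \<le> R" using \<epsilon> by (simp add: zero_le_mult_iff)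
  then have "0 \<le> \<rho>" using \<rho> by linarith
  have "(1 - \<epsilon>) * R \<le> (1 - \<epsilon>) * \<rho>" using \<epsilon> \<rho> by (intro mult_left_mono) auto
  then have r_le: "\<epsilon> * \<rho> \<le> \<rho> - r" using r by (simp add: algebra_simps)
  have "\<rho> * d \<le> \<rho> * r" using d \<open>0 \<le> \<rho>\<close> by (intro mult_left_mono)
  then have "(\<rho> - r)\<^sup>2 \<le> \<rho>\<^sup>2 - 2 * \<rho> * d + r\<^sup>2" by (simp add: power2_diff algebra_simps)
  moreover have "(\<epsilon> * \<rho>)\<^sup>2 \<le> (\<rho> - r)\<^sup>2" using r_le \<epsilon> \<open>0 \<le> \<rho>\<close> by (intro power_mono) auto
  ultimately show ?thesis using r_le d by linarith
qed

lemma radial_bounds_opposite: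
  fixes R r d :: real
  assumes "0 < R"
  shows "(\<forall>\<rho>\<ge>R. \<not> \<rho> * d \<le> 0) \<or> (\<forall>\<rho>\<ge>R. \<rho> \<le> \<rho> - d \<and> \<rho>\<^sup>2 \<le> \<rho>\<^sup>2 - 2 * \<rho> * d + r\<^sup>2)"
proof (cases "d \<le> 0")
  case True
  then have "\<rho> * d \<le> 0" if "R \<le> \<rho>" for \<rho>
    using assms that by (simp add: mult_nonneg_nonpos)
  then show ?thesis using True by (auto simp: add_increasing2)
next
  case False
  then have "\<not> \<rho> * d \<le> 0" if "R \<le> \<rho>" for \<rho>
    using assms that by (simp add: not_le)
  then show ?thesis by blast
qed

theorem lemma2p4:
  fixes J :: "real \<Rightarrow> real" and e :: "'a::euclidean_space" and \<epsilon> :: real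
  assumes dim: "DIM('a) \<ge> 2"
    and J_cont: "continuous_on {0..} J"
    and J_bdd: "bounded (J ` {0..})"
    and J_nonneg: "\<And>r. r \<ge> 0 \<Longrightarrow> J r \<ge> 0"
    and J_0: "J 0 > 0"
    and J_int: "((\<lambda>x::'a. J (norm x)) has_integral 1) UNIV"
    and J1: "(\<lambda>r. J r * r ^ DIM('a)) integrable_on {0..}"
    and e: "norm e = 1"
    and eps: "0 < \<epsilon>" "\<epsilon> < 1"
  shows "((\<lambda>R. \<integral>\<^sup>+ r \<in> {0..(1 - \<epsilon>) * R}. (\<integral>\<^sup>+ \<rho> \<in> {R..}. Jt_plus J e r \<rho> \<partial>lborel) \<partial>lborel)
            \<longlongrightarrow> 0) at_top
       \<and> ((\<lambda>R. \<integral>\<^sup>+ r \<in> {0..R}. (\<integral>\<^sup>+ \<rho> \<in> {R..}. Jt_minus J e r \<rho> \<partial>lborel) \<partial>lborel)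
            \<longlongrightarrow> 0) at_top"
proof -
  \<comment> \<open>Extending \<open>J\<close> evenly makes it Borel and nonnegative on all of \<open>\<real>\<close> without changing
    \<open>J (norm x)\<close>.\<close>
  define J' where "J' t = J \<bar>t\<bar>" for t
  have "continuous_on UNIV J'"
    unfolding J'_def by (rule continuous_on_compose2[OF J_cont continuous_on_rabs[OF continuous_on_id]]) auto
  then have [measurable]: "J' \<in> borel_measurable borel" by (rule borel_measurable_continuous_onI)
  have J'n: "0 \<le> J' t" for t unfolding J'_def by (rule J_nonneg) simp
  have J'1: "(\<lambda>t. J' t * t ^ DIM('a)) integrable_on {0..}"
    by (rule integrable_eq[OF J1]) (simp add: J'_def)
  have "Jt_plus J e = Jt_half_space J' e (\<lambda>s. 0 \<le> s)" "Jt_minus J e = Jt_half_space J' e (\<lambda>s. s \<le> 0)"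
    unfolding Jt_plus_def Jt_minus_def Jt_half_space_def J'_def abs_norm_cancel by (rule refl)+
  moreover have "((\<lambda>R. \<integral>\<^sup>+r\<in>{0..(1 - \<epsilon>) * R}. (\<integral>\<^sup>+\<rho>\<in>{R..}. Jt_half_space J' e (\<lambda>s. 0 \<le> s) r \<rho> \<partial>lborel) \<partial>lborel)
      \<longlongrightarrow> 0) at_top"
  proof (rule half_space_integral_tendsto_zero[OF _ _ J'n dim e J'1 eps(1)])
    show "(\<forall>\<rho>\<ge>R. \<not> 0 \<le> \<rho> * d) \<or> (\<forall>\<rho>\<ge>R. \<epsilon> * \<rho> \<le> \<rho> - d \<and> (\<epsilon> * \<rho>)\<^sup>2 \<le> \<rho>\<^sup>2 - 2 * \<rho> * d + r\<^sup>2)"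
      if "0 \<le> r" "r \<le> (1 - \<epsilon>) * R" "d \<le> r" for R r d :: real
      using radial_bounds_interior[OF eps that] by blast
  qed (use eps in simp_all)
  moreover have "((\<lambda>R. \<integral>\<^sup>+r\<in>{0..1 * R}. (\<integral>\<^sup>+\<rho>\<in>{R..}. Jt_half_space J' e (\<lambda>s. s \<le> 0) r \<rho> \<partial>lborel) \<partial>lborel)
      \<longlongrightarrow> 0) at_top"
  proof (rule half_space_integral_tendsto_zero[OF _ _ J'n dim e J'1 zero_less_one])
    show "(\<forall>\<rho>\<ge>R. \<not> \<rho> * d \<le> 0) \<or> (\<forall>\<rho>\<ge>R. 1 * \<rho> \<le> \<rho> - d \<and> (1 * \<rho>)\<^sup>2 \<le> \<rho>\<^sup>2 - 2 * \<rho> * d + r\<^sup>2)"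
      if "0 < R" for R r d :: real
      using radial_bounds_opposite[OF that, of d r] by simp
  qed simp_all
  ultimately show ?thesis by simp
qed
end
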